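(* Let $n_1,\dots,n_l\ge 2$ be integers, and let $a_1,\dots,a_l$ be the discrepancies of the chain $[n_1,\dots,n_l]$, i.e. the unique solution of $\sum_j a_jE_j\cdot E_i=2-n_i$ for a chain of smooth rational curves $E_1,\dots,E_l$ with $E_i^2=-n_i$, $E_i\cdot E_{i+1}=1$, $E_i\cdot E_j=0$ for $|i-j|\ge2$. Then $a_k+a_{k+1}<1$ for all $1\le k\le l-1$ (equivalently, the minimal resolution of a log terminal singularity of type $A_{q,q_1}$ with this resolution graph has no redundant point) if and only if $(n_1,\dots,n_l)$, up to reversing the order, is one of: $(2,\dots,2)$ with $\alpha\ge1$ entries; $(2,\dots,2,3)$ with $\alpha\ge1$ entries equal to $2$; $(2,2,3,2)$; $(2,3,2)$; $(2,4)$; $(n)$ with $n\ge3$.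
   Context: Here all discrepancies satisfy $0\le a_i<1$, so a point of the minimal resolution is redundant (i.e. the multiplicity of $N=\sum a_iE_i$ at it is at least $1$) exactly when it is $E_k\cap E_{k+1}$ with $a_k+a_{k+1}\ge1$. Notation $[n_1,\dots,n_l]$ stands for the Hirzebruch–Jung continued fraction $n_1-1/(n_2-1/(\cdots-1/n_l))=q/q_1$ describing the singularity of type $A_{q,q_1}$; $[n_1,\dots,n_l]$ and $[n_l,\dots,n_1]$ describe the same singularity. *)

theory Defs
  imports Complex_Main
begin

definition chain_int :: "int list \<Rightarrow> nat \<Rightarrow> nat \<Rightarrow> real" where
  "chain_int ns i j =
     (if i = j then - of_int (ns ! i)
      else if i + 1 = j \<or> j + 1 = i then 1 else 0)"

definition is_discrepancy :: "int list \<Rightarrow> (nat \<Rightarrow> real) \<Rightarrow> bool" where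
  "is_discrepancy ns a \<longleftrightarrow>
     (\<forall>i < length ns. (\<Sum>j < length ns. a j * chain_int ns j i) = 2 - of_int (ns ! i))"

definition no_redundant_list :: "int list \<Rightarrow> bool" where
  "no_redundant_list ns \<longleftrightarrow>
     (\<exists>\<alpha>\<ge>1. ns = replicate \<alpha> 2) \<or>
     (\<exists>\<alpha>\<ge>1. ns = replicate \<alpha> 2 @ [3]) \<or>
     ns = [2,2,3,2] \<or> ns = [2,3,2] \<or> ns = [2,4] \<or>
     (\<exists>n\<ge>3. ns = [n])"

end

theory Submission
  imports Defs
begin

text \<open>Pass to the log discrepancies \<open>x m = 1 - a (m - 1)\<close>, \<open>1 \<le> m \<le> l\<close>, extended by
  \<open>x 0 = x (l + 1) = 1\<close>.  The defining equations become \<open>n\<^sub>m x m = x (m - 1) + x (m + 1)\<close>,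
  and since all \<open>n\<^sub>m \<ge> 2\<close> a discrete maximum principle applies: \<open>x \<le> 1\<close> everywhere, and
  \<open>x \<le> 1/2\<close> on the whole segment between two curves with \<open>n\<^sub>m \<ge> 3\<close>, which yields a redundant
  point.  If at most one \<open>n\<^sub>m = w + 2\<close> exceeds 2, then \<open>x\<close> is affine on the two
  \<open>(-2)\<close>-chains of lengths \<open>p\<close> and \<open>q\<close>, hence explicit, and the smallest sums
  \<open>x m + x (m + 1)\<close> are the two next to the heavy curve.  So there is no redundant point iff
  \<open>p w (q + 1) < p + q + 2\<close> and \<open>q w (p + 1) < p + q + 2\<close>, and the solutions of these
  inequalities are exactly the chains of the list.\<close>

text \<open>Index \<open>m \<in> {1..l}\<close> stands for the curve with (0-based) index \<open>m - 1\<close> in \<open>chain_int\<close>;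
  the boundary values \<open>x 0 = x (l + 1) = 1\<close> are the log discrepancies of the missing neighbours
  of the end curves.\<close>
definition chain_log_discrepancy :: "nat \<Rightarrow> (nat \<Rightarrow> real) \<Rightarrow> (nat \<Rightarrow> real) \<Rightarrow> bool" where
  "chain_log_discrepancy l N x \<longleftrightarrow> x 0 = 1 \<and> x (Suc l) = 1 \<and>
     (\<forall>m. 1 \<le> m \<and> m \<le> l \<longrightarrow> N m * x m = x (m - 1) + x (Suc m))"

lemma discrete_maximum_principle:
  fixes y c :: "nat \<Rightarrow> real"
  assumes boundary: "y i \<le> 0" "y k \<le> 0"
    and c: "\<And>m. i < m \<Longrightarrow> m < k \<Longrightarrow> 2 \<le> c m"
    and sub: "\<And>m. i < m \<Longrightarrow> m < k \<Longrightarrow> c m * y m \<le> y (m - 1) + y (Suc m)"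
    and m: "i \<le> m" "m \<le> k"
  shows "y m \<le> 0"
proof (rule ccontr)
  assume "\<not> y m \<le> 0"
  define M where "M = Max (y ` {i..k})"
  have le_M: "y j \<le> M" if "i \<le> j" "j \<le> k" for j
    using that by (simp add: M_def)
  have M_pos: "0 < M"
    using le_M[OF m] \<open>\<not> y m \<le> 0\<close> by linarith
  have "M \<in> y ` {i..k}"
    using m unfolding M_def by (intro Max_in) auto
  then have ex: "\<exists>j. i \<le> j \<and> j \<le> k \<and> y j = M" by auto
  define j where "j = (LEAST j. i \<le> j \<and> j \<le> k \<and> y j = M)"
  have j: "i \<le> j" "j \<le> k" "y j = M"
    using LeastI_ex[OF ex] unfolding j_def by auto
  have interior: "i < j" "j < k"
    using j boundary M_pos by (auto simp: le_less)
  have "y (j - 1) \<noteq> M"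
  proof
    assume "y (j - 1) = M"
    then have "(LEAST j. i \<le> j \<and> j \<le> k \<and> y j = M) \<le> j - 1"
      using interior by (intro Least_le) auto
    then show False
      using interior unfolding j_def[symmetric] by simp
  qed
  then have "y (j - 1) < M"
    using le_M[of "j - 1"] interior by fastforce
  moreover have "y (Suc j) \<le> M"
    using le_M interior by simp
  moreover have "2 * M \<le> c j * y j"
    using c[OF interior] j M_pos by (simp add: mult_right_mono)
  ultimately show False
    using sub[OF interior] by linarith
qed

lemma chain_log_discrepancy_le_1:
  assumes x: "chain_log_discrepancy l N x"
    and N: "\<And>m. 1 \<le> m \<Longrightarrow> m \<le> l \<Longrightarrow> 2 \<le> N m"
    and m: "m \<le> Suc l"
  shows "x m \<le> 1"
proof -
  have "x m - 1 \<le> 0"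
  proof (rule discrete_maximum_principle[where c = N and i = 0 and k = "Suc l"])
    fix j assume j: "0 < j" "j < Suc l"
    then show "2 \<le> N j" using N by simp
    have "N j * (x j - 1) = (x (j - 1) - 1) + (x (Suc j) - 1) + (2 - N j)"
      using x j by (simp add: chain_log_discrepancy_def algebra_simps)
    then show "N j * (x j - 1) \<le> (x (j - 1) - 1) + (x (Suc j) - 1)"
      using N[of j] j by simp
  qed (use x m in \<open>auto simp: chain_log_discrepancy_def\<close>)
  then show ?thesis by simp
qed

text \<open>Between two curves with self-intersection at most \<open>-3\<close> all log discrepancies are
  at most \<open>1/2\<close>: apply the maximum principle to \<open>x - 1/2\<close>, cut off to zero outside.\<close>
lemma chain_log_discrepancy_two_heavy:
  assumes x: "chain_log_discrepancy l N x"
    and N: "\<And>m. 1 \<le> m \<Longrightarrow> m \<le> l \<Longrightarrow> 2 \<le> N m"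
    and ik: "1 \<le> i" "i < k" "k \<le> l" and heavy: "3 \<le> N i" "3 \<le> N k"
  shows "x i + x (Suc i) \<le> 1"
proof -
  define z where "z m = (if i \<le> m \<and> m \<le> k then x m - 1/2 else 0)" for m
  have x_le_1: "x m \<le> 1" if "m \<le> Suc l" for m
    using chain_log_discrepancy_le_1[OF x N that] .
  have z_le_0: "z m \<le> 0" if "i - 1 \<le> m" "m \<le> Suc k" for m
  proof (rule discrete_maximum_principle[where c = N and i = "i - 1" and k = "Suc k"])
    fix j assume j: "i - 1 < j" "j < Suc k"
    then show "2 \<le> N j" using N ik by simp
    have eq: "N j * (x j - 1/2) = (x (j - 1) - 1/2) + (x (Suc j) - 1/2) + (1 - N j / 2)"
      using x j ik by (simp add: chain_log_discrepancy_def algebra_simps)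
    consider "j = i" | "i < j" "j < k" | "j = k"
      using j ik by linarith
    then show "N j * z j \<le> z (j - 1) + z (Suc j)"
    proof cases
      case 1
      then show ?thesis
        using eq heavy(1) ik x_le_1[of "i - 1"] by (auto simp: z_def)
    next
      case 2
      then show ?thesis
        using eq N[of j] ik by (auto simp: z_def)
    next
      case 3
      then show ?thesis
        using eq heavy(2) ik x_le_1[of "Suc k"] by (auto simp: z_def)
    qed
  qed (use that ik in \<open>auto simp: z_def\<close>)
  have "z i \<le> 0" "z (Suc i) \<le> 0"
    using ik by (auto intro: z_le_0)
  then show ?thesis
    using ik by (simp add: z_def)
qed

lemma affine_if_second_differences_vanish:
  fixes x :: "nat \<Rightarrow> real"
  assumes eq: "\<And>m. i < m \<Longrightarrow> m < k \<Longrightarrow> 2 * x m = x (m - 1) + x (Suc m)"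
    and m: "i \<le> m" "m \<le> k"
  shows "x m = x i + (real m - real i) * (x (Suc i) - x i)"
proof -
  have "x (i + d) = x i + real d * (x (Suc i) - x i)" if "i + d \<le> k" for d
    using that
  proof (induction d rule: induct_nat_012)
    case (ge2 d)
    have "2 * x (i + Suc d) = x (i + d) + x (i + Suc (Suc d))"
      using eq[of "i + Suc d"] ge2.prems by simp
    with ge2.IH ge2.prems show ?case
      by (simp add: algebra_simps)
  qed simp_all
  from this[of "m - i"] m show ?thesis
    by (simp add: of_nat_diff)
qed

lemma chain_log_discrepancy_one_heavy_affine:
  fixes w :: real
  assumes x: "chain_log_discrepancy (p + q + 1) N x"
    and N: "\<And>m. 1 \<le> m \<Longrightarrow> m \<le> p + q + 1 \<Longrightarrow> N m = (if m = Suc p then w + 2 else 2)"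
  obtains s t where "\<And>m. m \<le> Suc p \<Longrightarrow> x m = 1 - real m * s"
    and "\<And>m. Suc p \<le> m \<Longrightarrow> m \<le> p + q + 2 \<Longrightarrow> x m = 1 - (real (p + q + 2) - real m) * t"
    and "(real p + 1) * s = (real q + 1) * t"
    and "w * (1 - (real p + 1) * s) = s + t"
proof
  define s t where "s = 1 - x 1" and "t = x (Suc (Suc p)) - x (Suc p)"
  have rec: "N m * x m = x (m - 1) + x (Suc m)" if "1 \<le> m" "m \<le> p + q + 1" for m
    using x that by (simp add: chain_log_discrepancy_def)
  have flat: "2 * x m = x (m - 1) + x (Suc m)" if "1 \<le> m" "m \<le> p + q + 1" "m \<noteq> Suc p" for m
    using rec[OF that(1,2)] N[OF that(1,2)] that(3) by simp
  show left: "x m = 1 - real m * s" if "m \<le> Suc p" for m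
  proof -
    have "x m = x 0 + (real m - real 0) * (x (Suc 0) - x 0)"
      by (rule affine_if_second_differences_vanish) (use flat that in auto)
    then show ?thesis
      using x by (simp add: s_def chain_log_discrepancy_def algebra_simps)
  qed
  have right': "x m = x (Suc p) + (real m - real (Suc p)) * t" if "Suc p \<le> m" "m \<le> p + q + 2" for m
    unfolding t_def by (rule affine_if_second_differences_vanish) (use flat that in auto)
  have "x (p + q + 2) = 1"
    using x by (simp add: chain_log_discrepancy_def)
  then have x_heavy: "x (Suc p) = 1 - (real q + 1) * t"
    using right'[of "p + q + 2"] by (simp add: algebra_simps)
  show right: "x m = 1 - (real (p + q + 2) - real m) * t" if "Suc p \<le> m" "m \<le> p + q + 2" for m
    using right'[OF that] x_heavy by (simp add: algebra_simps)
  show st: "(real p + 1) * s = (real q + 1) * t"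
    using left[of "Suc p"] x_heavy by (simp add: algebra_simps)
  have "(w + 2) * x (Suc p) = x p + x (Suc (Suc p))"
    using rec[of "Suc p"] N[of "Suc p"] by simp
  then have "(w + 2) * (1 - (real p + 1) * s) = (1 - real p * s) + (1 - real q * t)"
    using left[of p] left[of "Suc p"] right[of "Suc (Suc p)"] by (simp add: add.commute)
  then show "w * (1 - (real p + 1) * s) = s + t"
    using st by algebra
qed

lemma one_heavy_slopes:
  fixes s t w :: real
  assumes st: "(real p + 1) * s = (real q + 1) * t" "w * (1 - (real p + 1) * s) = s + t"
    and w: "0 \<le> w"
  shows "0 \<le> s" and "0 \<le> t"
    and "(2 * real p + 1) * s < 1 \<longleftrightarrow> real p * w * (real q + 1) < real p + real q + 2"
    and "(2 * real q + 1) * t < 1 \<longleftrightarrow> real q * w * (real p + 1) < real p + real q + 2"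
proof -
  define D where "D = real p + real q + 2 + w * (real p + 1) * (real q + 1)"
  have D: "0 < D"
    using w unfolding D_def by (simp add: add_pos_nonneg)
  from st have "s * D = w * (real q + 1)" "t * D = w * (real p + 1)"
    unfolding D_def by algebra+
  with D have s: "s = w * (real q + 1) / D" and t: "t = w * (real p + 1) / D"
    by (simp_all add: field_simps)
  show "0 \<le> s" "0 \<le> t"
    using D w by (simp_all add: s t)
  show "(2 * real p + 1) * s < 1 \<longleftrightarrow> real p * w * (real q + 1) < real p + real q + 2"
    using D by (simp add: s D_def field_simps)
  show "(2 * real q + 1) * t < 1 \<longleftrightarrow> real q * w * (real p + 1) < real p + real q + 2"
    using D by (simp add: t D_def field_simps)
qed

text \<open>Along each \<open>(-2)\<close>-chain the sums \<open>x m + x (m + 1)\<close> decrease towards the heavy curve,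
  so only the two pairs containing it matter.\<close>
lemma chain_log_discrepancy_one_heavy_pair_sums:
  fixes w :: real
  assumes x: "chain_log_discrepancy (p + q + 1) N x" and w: "0 \<le> w"
    and N: "\<And>m. 1 \<le> m \<Longrightarrow> m \<le> p + q + 1 \<Longrightarrow> N m = (if m = Suc p then w + 2 else 2)"
  shows "(\<forall>m. 1 \<le> m \<longrightarrow> Suc m \<le> p + q + 1 \<longrightarrow> 1 < x m + x (Suc m)) \<longleftrightarrow>
    (1 \<le> p \<longrightarrow> real p * w * (real q + 1) < real p + real q + 2) \<and>
    (1 \<le> q \<longrightarrow> real q * w * (real p + 1) < real p + real q + 2)"
proof -
  obtain s t where left: "\<And>m. m \<le> Suc p \<Longrightarrow> x m = 1 - real m * s"
    and right: "\<And>m. Suc p \<le> m \<Longrightarrow> m \<le> p + q + 2 \<Longrightarrow> x m = 1 - (real (p + q + 2) - real m) * t"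
    and st: "(real p + 1) * s = (real q + 1) * t" "w * (1 - (real p + 1) * s) = s + t"
    using chain_log_discrepancy_one_heavy_affine[OF x N] by blast
  note slopes = one_heavy_slopes[OF st w]
  have pair_left: "x m + x (Suc m) = 2 - (2 * real m + 1) * s" if "m \<le> p" for m
    using left[of m] left[of "Suc m"] that by (simp add: algebra_simps)
  have pair_right: "x m + x (Suc m) = 2 - (2 * (real (p + q + 2) - real m) - 1) * t"
    if "Suc p \<le> m" "m \<le> p + q + 1" for m
    using right[of m] right[of "Suc m"] that by (simp add: algebra_simps)
  have pairs_left: "(\<forall>m. 1 \<le> m \<longrightarrow> m \<le> p \<longrightarrow> 1 < x m + x (Suc m)) \<longleftrightarrow>
      (1 \<le> p \<longrightarrow> (2 * real p + 1) * s < 1)"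
  proof
    have "(2 * real m + 1) * s \<le> (2 * real p + 1) * s" if "m \<le> p" for m
      using that slopes by (intro mult_right_mono) auto
    then show "1 \<le> p \<longrightarrow> (2 * real p + 1) * s < 1 \<Longrightarrow> \<forall>m. 1 \<le> m \<longrightarrow> m \<le> p \<longrightarrow> 1 < x m + x (Suc m)"
      using pair_left by fastforce
  qed (use pair_left in auto)
  have pairs_right: "(\<forall>m. Suc p \<le> m \<longrightarrow> m \<le> p + q \<longrightarrow> 1 < x m + x (Suc m)) \<longleftrightarrow>
      (1 \<le> q \<longrightarrow> (2 * real q + 1) * t < 1)"
  proof
    have "(2 * (real (p + q + 2) - real m) - 1) * t \<le> (2 * real q + 1) * t" if "Suc p \<le> m" for m
      using that slopes by (intro mult_right_mono) auto
    then show "1 \<le> q \<longrightarrow> (2 * real q + 1) * t < 1 \<Longrightarrow>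
        \<forall>m. Suc p \<le> m \<longrightarrow> m \<le> p + q \<longrightarrow> 1 < x m + x (Suc m)"
      using pair_right by fastforce
  qed (use pair_right[of "Suc p"] in \<open>auto simp: add.commute\<close>)
  have "(\<forall>m. 1 \<le> m \<longrightarrow> Suc m \<le> p + q + 1 \<longrightarrow> 1 < x m + x (Suc m)) \<longleftrightarrow>
      (\<forall>m. 1 \<le> m \<longrightarrow> m \<le> p \<longrightarrow> 1 < x m + x (Suc m)) \<and>
      (\<forall>m. Suc p \<le> m \<longrightarrow> m \<le> p + q \<longrightarrow> 1 < x m + x (Suc m))"
    by (auto simp: not_less_eq_eq[symmetric])
  then show ?thesis
    unfolding pairs_left pairs_right slopes(3,4) .
qed

lemma sum_chain_int:
  assumes i: "i < length ns"
  shows "(\<Sum>j<length ns. a j * chain_int ns j i) =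
    (if 0 < i then a (i - 1) else 0) - of_int (ns ! i) * a i
      + (if Suc i < length ns then a (Suc i) else 0)"
proof -
  have "a j * chain_int ns j i =
      (if 0 < i then (if j = i - 1 then a j else 0) else 0) - (if j = i then of_int (ns ! i) * a i else 0)
        + (if j = Suc i then a j else 0)" for j
    by (auto simp: chain_int_def)
  then show ?thesis
    using i by (simp add: sum.distrib sum_subtractf) linarith
qed

definition log_discrepancy :: "nat \<Rightarrow> (nat \<Rightarrow> real) \<Rightarrow> nat \<Rightarrow> real" where
  "log_discrepancy l a m = (if 1 \<le> m \<and> m \<le> l then 1 - a (m - 1) else 1)"

lemma is_discrepancy_chain_log_discrepancy:
  assumes "is_discrepancy ns a"
  shows "chain_log_discrepancy (length ns) (\<lambda>m. of_int (ns ! (m - 1))) (log_discrepancy (length ns) a)"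
  unfolding chain_log_discrepancy_def
proof (intro conjI allI impI)
  fix m assume m: "1 \<le> m \<and> m \<le> length ns"
  then obtain i where i: "m = Suc i" "i < length ns"
    by (cases m) auto
  have "(if 0 < i then a (i - 1) else 0) - of_int (ns ! i) * a i
      + (if Suc i < length ns then a (Suc i) else 0) = 2 - of_int (ns ! i)"
    using assms i(2) sum_chain_int[OF i(2), of a] unfolding is_discrepancy_def by simp
  then show "of_int (ns ! (m - 1)) * log_discrepancy (length ns) a m =
      log_discrepancy (length ns) a (m - 1) + log_discrepancy (length ns) a (Suc m)"
    using i by (auto simp: log_discrepancy_def algebra_simps)
qed (simp_all add: log_discrepancy_def)

lemma no_redundant_point_iff_log_discrepancy:
  "(\<forall>k. k + 1 < l \<longrightarrow> a k + a (k + 1) < 1) \<longleftrightarrow>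
   (\<forall>m. 1 \<le> m \<longrightarrow> Suc m \<le> l \<longrightarrow> 1 < log_discrepancy l a m + log_discrepancy l a (Suc m))"
proof -
  have "(\<forall>m. 1 \<le> m \<longrightarrow> Suc m \<le> l \<longrightarrow> P m) \<longleftrightarrow> (\<forall>k. k + 1 < l \<longrightarrow> P (Suc k))" for P
  proof (intro iffI allI impI)
    fix m assume "\<forall>k. k + 1 < l \<longrightarrow> P (Suc k)" "1 \<le> m" "Suc m \<le> l"
    then show "P m"
      by (cases m) auto
  qed auto
  then show ?thesis
    by (simp add: log_discrepancy_def algebra_simps)
qed

lemma redundant_point_if_two_heavy:
  assumes a: "is_discrepancy ns a" and ns: "\<forall>i < length ns. 2 \<le> ns ! i"
    and ik: "i < k" "k < length ns" and heavy: "3 \<le> ns ! i" "3 \<le> ns ! k"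
  shows "1 \<le> a i + a (Suc i)"
proof -
  have "log_discrepancy (length ns) a (Suc i) + log_discrepancy (length ns) a (Suc (Suc i)) \<le> 1"
    using is_discrepancy_chain_log_discrepancy[OF a] ns ik heavy
    by (intro chain_log_discrepancy_two_heavy[where k = "Suc k"]) auto
  then show ?thesis
    using ik by (simp add: log_discrepancy_def)
qed

lemma no_redundant_point_iff_one_heavy:
  fixes p q w :: nat
  assumes a: "is_discrepancy (replicate p 2 @ [int w + 2] @ replicate q 2) a"
  shows "(\<forall>k. k + 1 < p + q + 1 \<longrightarrow> a k + a (k + 1) < 1) \<longleftrightarrow>
    (1 \<le> p \<longrightarrow> p * w * (q + 1) < p + q + 2) \<and> (1 \<le> q \<longrightarrow> q * w * (p + 1) < p + q + 2)"
proof -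
  let ?ns = "replicate p 2 @ [int w + 2] @ replicate q (2::int)"
  have entries: "of_int (?ns ! (m - 1)) = (if m = Suc p then real w + 2 else 2)"
    if "1 \<le> m" "m \<le> p + q + 1" for m
    using that by (cases "m - 1 < p") (auto simp: nth_append nth_Cons' not_less)
  have x: "chain_log_discrepancy (p + q + 1) (\<lambda>m. of_int (?ns ! (m - 1))) (log_discrepancy (p + q + 1) a)"
    using is_discrepancy_chain_log_discrepancy[OF a] by simp
  have cast: "real u * real w * (real v + 1) < real p + real q + 2 \<longleftrightarrow> u * w * (v + 1) < p + q + 2"
    for u v
    by (simp only: of_nat_less_iff[symmetric, where 'a = real]) (simp add: algebra_simps)
  have "(\<forall>k. k + 1 < p + q + 1 \<longrightarrow> a k + a (k + 1) < 1) \<longleftrightarrow>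
    (1 \<le> p \<longrightarrow> real p * real w * (real q + 1) < real p + real q + 2) \<and>
    (1 \<le> q \<longrightarrow> real q * real w * (real p + 1) < real p + real q + 2)"
    unfolding no_redundant_point_iff_log_discrepancy
    using x by (rule chain_log_discrepancy_one_heavy_pair_sums) (use entries in auto)
  then show ?thesis
    unfolding cast .
qed

lemma one_sided_heavy_condition_iff:
  fixes q w :: nat
  shows "(1 \<le> q \<longrightarrow> q * w < q + 2) \<longleftrightarrow> q = 0 \<or> w \<le> 1 \<or> (w = 2 \<and> q = 1)"
proof (cases "q = 0 \<or> w \<le> 1")
  case False
  then have "q * w < q + 2 \<longleftrightarrow> w = 2 \<and> q = 1"
  proof (cases "w = 2")
    case False
    then have "q * 3 \<le> q * w"
      using \<open>\<not> (q = 0 \<or> w \<le> 1)\<close> by simp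
    then have "\<not> q * w < q + 2"
      using \<open>\<not> (q = 0 \<or> w \<le> 1)\<close> by linarith
    then show ?thesis
      using False by simp
  qed auto
  with False show ?thesis by auto
qed (auto simp: le_Suc_eq)

lemma two_sided_heavy_condition_bounds:
  fixes p q w :: nat
  assumes pqw: "1 \<le> p" "1 \<le> q" "1 \<le> w"
    and left: "p * w * (q + 1) < p + q + 2" and right: "q * w * (p + 1) < p + q + 2"
  shows "p \<le> 2" and "q \<le> 2" and "w \<le> 2"
proof -
  have "p * 1 * (q + 1) \<le> p * w * (q + 1)" "q * 1 * (p + 1) \<le> q * w * (p + 1)"
    using pqw by (intro mult_le_mono; simp)+
  with left right have pq: "p * q < q + 2" "p * q < p + 2"
    by (simp_all add: algebra_simps)
  show p: "p \<le> 2"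
  proof (rule ccontr)
    assume "\<not> p \<le> 2"
    then have "3 * q \<le> p * q" by simp
    with pq pqw show False by linarith
  qed
  show q: "q \<le> 2"
  proof (rule ccontr)
    assume "\<not> q \<le> 2"
    then have "3 * p \<le> p * q" by simp
    with pq pqw show False by linarith
  qed
  have "w * 2 \<le> p * w * (q + 1)"
    using pqw by (intro mult_le_mono) auto
  with left p q show "w \<le> 2"
    by linarith
qed

lemma one_heavy_condition_iff:
  fixes p q w :: nat
  shows "(1 \<le> p \<longrightarrow> p * w * (q + 1) < p + q + 2) \<and> (1 \<le> q \<longrightarrow> q * w * (p + 1) < p + q + 2) \<longleftrightarrow>
    w = 0 \<or> (p = 0 \<and> q = 0) \<or> (w = 1 \<and> (p = 0 \<or> q = 0 \<or> (p, q) \<in> {(1, 1), (1, 2), (2, 1)})) \<or>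
    (w = 2 \<and> p + q = 1)"
    (is "?cond \<longleftrightarrow> _")
proof -
  consider "p = 0" | "q = 0" | "1 \<le> p" "1 \<le> q" "1 \<le> w" | "w = 0"
    by linarith
  then show ?thesis
  proof cases
    case 1
    then show ?thesis
      using one_sided_heavy_condition_iff[of q w] by auto
  next
    case 2
    then show ?thesis
      using one_sided_heavy_condition_iff[of p w] by auto
  next
    case 3
    have "?cond \<longleftrightarrow> p * w * (q + 1) < p + q + 2 \<and> q * w * (p + 1) < p + q + 2"
      using 3 by simp
    moreover have "p \<in> {1, 2} \<and> q \<in> {1, 2} \<and> w \<in> {1, 2}" if "?cond"
      using two_sided_heavy_condition_bounds[of p q w] 3 that by auto
    ultimately show ?thesis
      using 3 by auto
  qed simp
qed

lemma replicate_single_eq_iff: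
  assumes "n \<noteq> c" "n' \<noteq> c"
  shows "replicate p c @ [n] @ replicate q c = replicate p' c @ [n'] @ replicate q' c \<longleftrightarrow>
    p = p' \<and> n = n' \<and> q = q'"
  using assms
proof (induction p arbitrary: p')
  case 0
  then show ?case by (cases p') auto
next
  case (Suc p)
  then show ?case by (cases p') auto
qed

lemma no_redundant_list_single_heavy_iff:
  fixes p q w :: nat
  shows "no_redundant_list (replicate p 2 @ [int w + 2] @ replicate q 2) \<longleftrightarrow>
    w = 0 \<or> (p = 0 \<and> q = 0) \<or> (w = 1 \<and> (q = 0 \<or> (p, q) \<in> {(1, 1), (2, 1)})) \<or>
    (w = 2 \<and> p = 1 \<and> q = 0)"
proof (cases "w = 0")
  case True
  have "replicate p 2 @ [2] @ replicate q 2 = replicate (p + 1 + q) (2::int)"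
    by (simp only: replicate_add) simp
  then show ?thesis
    using True unfolding no_redundant_list_def by auto
next
  case False
  let ?ns = "replicate p 2 @ [int w + 2] @ replicate q (2::int)"
  have eq_iff: "?ns = replicate p' 2 @ [n'] @ replicate q' 2 \<longleftrightarrow> p = p' \<and> int w + 2 = n' \<and> q = q'"
    if "n' \<noteq> 2" for n' p' q'
    using False that by (intro replicate_single_eq_iff) auto
  have all_2: "?ns \<noteq> replicate k 2" for k
  proof
    assume eq: "?ns = replicate k 2"
    have "p < k"
      using arg_cong[OF eq, of length] by simp
    have "int w + 2 = ?ns ! p"
      by (simp add: nth_append)
    also have "\<dots> = 2"
      using \<open>p < k\<close> unfolding eq by simp
    finally show False
      using False by simp
  qed
  have eq_twos_3: "?ns = replicate k 2 @ [3] \<longleftrightarrow> w = 1 \<and> p = k \<and> q = 0" for k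
    using eq_iff[of 3 k 0] by auto
  have eq_2232: "?ns = [2, 2, 3, 2] \<longleftrightarrow> w = 1 \<and> p = 2 \<and> q = 1"
    using eq_iff[of 3 2 1] by (auto simp: numeral_2_eq_2)
  have eq_232: "?ns = [2, 3, 2] \<longleftrightarrow> w = 1 \<and> p = 1 \<and> q = 1"
    using eq_iff[of 3 1 1] by auto
  have eq_24: "?ns = [2, 4] \<longleftrightarrow> w = 2 \<and> p = 1 \<and> q = 0"
    using eq_iff[of 4 1 0] by auto
  have eq_singleton: "(\<exists>m\<ge>3. ?ns = [m]) \<longleftrightarrow> p = 0 \<and> q = 0"
  proof
    assume "\<exists>m\<ge>3. ?ns = [m]"
    then obtain m where "3 \<le> m" "?ns = replicate 0 2 @ [m] @ replicate 0 2"
      by auto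
    then show "p = 0 \<and> q = 0"
      using eq_iff[of m 0 0] by simp
  qed (use False in auto)
  show ?thesis
    unfolding no_redundant_list_def eq_twos_3 eq_2232 eq_232 eq_24 eq_singleton using all_2 False by auto
qed

lemma no_redundant_list_imp_single_heavy:
  assumes "no_redundant_list ns"
  shows "\<exists>p n q. ns = replicate p 2 @ [n] @ replicate q 2"
  using assms unfolding no_redundant_list_def
proof (elim disjE exE conjE)
  fix \<alpha> :: nat assume "1 \<le> \<alpha>" "ns = replicate \<alpha> 2"
  then have "ns = replicate (\<alpha> - 1) 2 @ [2] @ replicate 0 2"
    by (simp add: replicate_append_same flip: replicate_Suc)
  then show ?thesis by blast
next
  fix \<alpha> :: nat assume "ns = replicate \<alpha> 2 @ [3]"
  then have "ns = replicate \<alpha> 2 @ [3] @ replicate 0 2" by simp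
  then show ?thesis by blast
next
  assume "ns = [2, 2, 3, 2]"
  then have "ns = replicate 2 2 @ [3] @ replicate 1 2" by (simp add: numeral_2_eq_2)
  then show ?thesis by blast
next
  assume "ns = [2, 3, 2]"
  then have "ns = replicate 1 2 @ [3] @ replicate 1 2" by simp
  then show ?thesis by blast
next
  assume "ns = [2, 4]"
  then have "ns = replicate 1 2 @ [4] @ replicate 0 2" by simp
  then show ?thesis by blast
next
  fix n assume "ns = [n]"
  then have "ns = replicate 0 2 @ [n] @ replicate 0 2" by simp
  then show ?thesis by blast
qed

lemma single_heavy_if_no_two_heavy:
  assumes "xs \<noteq> []" and two: "\<And>i k. i < k \<Longrightarrow> k < length xs \<Longrightarrow> xs ! i = c \<or> xs ! k = c"
  shows "\<exists>p n q. xs = replicate p c @ [n] @ replicate q c"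
proof -
  have "\<exists>p<length xs. \<forall>j<length xs. j \<noteq> p \<longrightarrow> xs ! j = c"
  proof (cases "\<exists>p<length xs. xs ! p \<noteq> c")
    case True
    then obtain p where "p < length xs" "xs ! p \<noteq> c" by blast
    then show ?thesis
      using two by (metis linorder_neqE_nat)
  qed (use assms(1) in auto)
  then obtain p where p: "p < length xs" and others: "\<And>j. j < length xs \<Longrightarrow> j \<noteq> p \<Longrightarrow> xs ! j = c"
    by blast
  have "take p xs = replicate p c"
    using p others by (intro replicate_eqI) (auto simp: in_set_conv_nth)
  moreover have "drop (Suc p) xs = replicate (length xs - Suc p) c"
    using p others by (intro replicate_eqI) (auto simp: in_set_conv_nth)
  ultimately have "xs = replicate p c @ [xs ! p] @ replicate (length xs - Suc p) c"
    using id_take_nth_drop[OF p] by simp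
  then show ?thesis by blast
qed

lemma no_redundant_point_iff_single_heavy:
  assumes a: "is_discrepancy ns a" and ns_ge_2: "\<forall>i < length ns. 2 \<le> ns ! i"
    and ns: "ns = replicate p 2 @ [n] @ replicate q 2"
  shows "(\<forall>k. k + 1 < length ns \<longrightarrow> a k + a (k + 1) < 1) \<longleftrightarrow>
    no_redundant_list ns \<or> no_redundant_list (rev ns)"
proof -
  have "2 \<le> n"
    using ns_ge_2[rule_format, of p] ns by (simp add: nth_append)
  then obtain w :: nat where w: "n = int w + 2"
    using zero_le_imp_eq_int[of "n - 2"] by (auto simp: algebra_simps)
  have "(\<forall>k. k + 1 < length ns \<longrightarrow> a k + a (k + 1) < 1) \<longleftrightarrow>
      (1 \<le> p \<longrightarrow> p * w * (q + 1) < p + q + 2) \<and> (1 \<le> q \<longrightarrow> q * w * (p + 1) < p + q + 2)"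
    using no_redundant_point_iff_one_heavy[of p w q a] a unfolding ns w by simp
  also have "\<dots> \<longleftrightarrow> no_redundant_list ns \<or> no_redundant_list (rev ns)"
  proof -
    have "rev ns = replicate q 2 @ [int w + 2] @ replicate p 2"
      by (simp add: ns w)
    then show ?thesis
      unfolding one_heavy_condition_iff
      by (simp only: ns w no_redundant_list_single_heavy_iff) auto
  qed
  finally show ?thesis .
qed

lemma not_no_redundant_list_if_not_single_heavy:
  assumes "\<nexists>p n q. ns = replicate p 2 @ [n] @ replicate q 2"
  shows "\<not> no_redundant_list ns" and "\<not> no_redundant_list (rev ns)"
proof -
  show "\<not> no_redundant_list ns"
    using assms no_redundant_list_imp_single_heavy by blast
  show "\<not> no_redundant_list (rev ns)"
  proof
    assume "no_redundant_list (rev ns)"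
    then obtain p n q where "rev ns = replicate p 2 @ [n] @ replicate q 2"
      using no_redundant_list_imp_single_heavy by blast
    then have "ns = replicate q 2 @ [n] @ replicate p 2"
      by (simp add: rev_swap)
    with assms show False by blast
  qed
qed

theorem proposition4p3:
  fixes ns :: "int list" and a :: "nat \<Rightarrow> real"
  assumes "ns \<noteq> []"
    and "\<forall>i < length ns. ns ! i \<ge> 2"
    and "is_discrepancy ns a"
  shows "(\<forall>k. k + 1 < length ns \<longrightarrow> a k + a (k + 1) < 1) \<longleftrightarrow>
         (no_redundant_list ns \<or> no_redundant_list (rev ns))"
proof (cases "\<exists>p n q. ns = replicate p 2 @ [n] @ replicate q 2")
  case True
  then obtain p n q where "ns = replicate p 2 @ [n] @ replicate q 2"
    by blast
  then show ?thesis
    by (rule no_redundant_point_iff_single_heavy[OF assms(3,2)])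
next
  case False
  then obtain i k where ik: "i < k" "k < length ns" "ns ! i \<noteq> 2" "ns ! k \<noteq> 2"
    using single_heavy_if_no_two_heavy[OF assms(1)] by blast
  have "2 \<le> ns ! i" "2 \<le> ns ! k"
    using assms(2) ik by auto
  with ik have "3 \<le> ns ! i" "3 \<le> ns ! k"
    by auto
  with ik assms(2,3) have "1 \<le> a i + a (Suc i)"
    by (intro redundant_point_if_two_heavy[where k = k])
  with ik have "\<not> (\<forall>k. k + 1 < length ns \<longrightarrow> a k + a (k + 1) < 1)"
    by (metis Suc_eq_plus1 Suc_lessI less_trans_Suc not_le)
  with not_no_redundant_list_if_not_single_heavy[OF False] show ?thesis
    by blast
qed

end
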